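(* Fix an integer $d\ge 1$, $h\in[0,1]$ with $hd\in\mathbb{Z}$, and $p\in(0,\tfrac12]$. Consider the binary node-classification setting described in the context, with training set containing nodes of both classes, and the heterophilous one-layer linear GNN $F'(\mathbf{X})=(\mathbf{X}\,\Vert\,\mathbf{A}\mathbf{X})\mathbf{W}$, where $\Vert$ is row-wise concatenation, so each node $i$ is represented by the $4$-dimensional row $\mathbf{u}_i=[\mathbf{x}_i,\ \sum_{j\in N_1(i)}\mathbf{x}_j]$ and $\mathbf{W}$ is $4\times 2$. Let $\mathbf{R}$ be the $2\times 4$ matrix whose rows are the (common) representation $\mathbf{u}^{(0)}$ of class-$0$ training nodes and the (common) representation $\mathbf{u}^{(1)}$ of class-$1$ training nodes, and let $\mathbf{W}=\mathbf{R}^{\top}(\mathbf{R}\mathbf{R}^{\top})^{-1}\begin{bmatrix}1&0\\0&1\end{bmatrix}$ (the minimum-norm solution of $\mathbf{u}_i\mathbf{W}=\mathbf{y}_i$ for all training nodes $i$; $\mathbf{R}\mathbf{R}^\top$ is invertible under these hypotheses). Let $t$ be a test node of class $0$ (so $\mathbf{y}_t=[1,0]$, $\mathbf{x}_t=[\tfrac12+p,\tfrac12-p]$) of degree $d$ with local homophily ratio $h_t=h+\alpha_t\in[0,1]$, i.e. exactly $h_t d$ of its $d$ neighbors have class $0$. Then the output logit vector $\mathbf{z}_t=\mathbf{u}_t\mathbf{W}$ satisfies $$\mathbf{z}_t=\mathbf{y}_t+b_1'\,[\alpha_t,\ -\alpha_t],\qquad b_1'=\frac{d^2(2h-1)}{1+d^2(2h-1)^2},$$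 equivalently $\mathbf{z}_t=\frac{1}{1+d^2(2h-1)^2}\big[\,1+d^2(2h-1)(h+h_t-1),\ \ d^2(2h-1)(h-h_t)\,\big]$.
   Context: Binary node classification on a simple graph $G$ with adjacency matrix $\mathbf{A}$. Each node $i$ has a class $y_i\in\{0,1\}$, one-hot label vector $\mathbf{y}_i=[1,0]$ if $y_i=0$ and $[0,1]$ if $y_i=1$, and feature vector $\mathbf{x}_i=[\tfrac12+p,\ \tfrac12-p]$ if $y_i=0$ and $\mathbf{x}_i=[\tfrac12-p,\ \tfrac12+p]$ if $y_i=1$, where $p\in[0,\tfrac12]$ is a fixed parameter. $\mathbf{X}$ is the matrix whose rows are the $\mathbf{x}_i$. The local homophily ratio of a node $t$ is the fraction of its neighbors having the same class as $t$. Standing assumption on the training set: every training node has degree exactly $d$ and local homophily ratio exactly $h$ (so it has $hd$ neighbors of its own class and $(1-h)d$ of the other class); consequently all class-$0$ training nodes share one representation $\mathbf{u}^{(0)}$ and all class-$1$ training nodes share one representation $\mathbf{u}^{(1)}$. $N_1(i)$ denotes the set of neighbors of $i$. $\alpha_t=h_t-h$ is the shift of the test node's local homophily from the global homophily $h$. *)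

theory Defs
  imports "HOL-Analysis.Analysis"
begin

definition feat :: "real \<Rightarrow> nat \<Rightarrow> real^2" where
  "feat p c = (if c = 0 then vector [1/2 + p, 1/2 - p] else vector [1/2 - p, 1/2 + p])"

definition onehot :: "nat \<Rightarrow> real^2" where
  "onehot c = (if c = 0 then vector [1, 0] else vector [0, 1])"

definition nbrs :: "'a set \<Rightarrow> ('a \<Rightarrow> 'a \<Rightarrow> bool) \<Rightarrow> 'a \<Rightarrow> 'a set" where
  "nbrs V E i = {j \<in> V. E i j}"

definition local_homophily :: "'a set \<Rightarrow> ('a \<Rightarrow> 'a \<Rightarrow> bool) \<Rightarrow> ('a \<Rightarrow> nat) \<Rightarrow> 'a \<Rightarrow> real" where
  "local_homophily V E y i = real (card {j \<in> nbrs V E i. y j = y i}) / real (card (nbrs V E i))"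

definition rep :: "'a set \<Rightarrow> ('a \<Rightarrow> 'a \<Rightarrow> bool) \<Rightarrow> ('a \<Rightarrow> nat) \<Rightarrow> real \<Rightarrow> 'a \<Rightarrow> real^4" where
  "rep V E y p i = (let a = (\<Sum>j\<in>nbrs V E i. feat p (y j))
     in vector [feat p (y i) $ 1, feat p (y i) $ 2, a $ 1, a $ 2])"

end

theory Submission
  imports Defs
begin

text \<open>The training representations of the two classes are mirror images of each other
  (swap the two feature coordinates and the two aggregated coordinates), so
  \<open>u\<^sub>0 + u\<^sub>1\<close> and \<open>u\<^sub>0 - u\<^sub>1\<close> are orthogonal. The minimum-norm interpolant \<open>W\<close> sends a
  row \<open>x\<close> to the coefficients of its orthogonal projection onto the row space, namely
  \<open>[\<sigma> + \<delta>, \<sigma> - \<delta>]\<close>, where \<open>\<sigma>\<close> and \<open>\<delta>\<close> are the components of \<open>x\<close> along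
  \<open>u\<^sub>0 + u\<^sub>1 = [1, 1, d, d]\<close> and \<open>u\<^sub>0 - u\<^sub>1 = 2p [1, -1, c, -c]\<close> with \<open>c = d (2h - 1)\<close>.
  The test representation has the same coordinate sums as the training ones, so \<open>\<sigma> = 1/2\<close>,
  while \<open>\<delta>\<close> is affine in the test homophily \<open>h\<^sub>t\<close>; this gives the shift \<open>b\<^sub>1' \<alpha>\<^sub>t\<close>.\<close>

lemma matrix_mul_matrix_inv:
  fixes A :: "'a::semiring_1^'n^'m"
  assumes "invertible A"
  shows "A ** matrix_inv A = mat 1"
  using assms unfolding invertible_def matrix_inv_def by (rule someI2_ex) simp

lemma gram_vector_2:
  fixes r0 r1 :: "real^'n"
  defines "R \<equiv> vector [r0, r1] :: real^'n^2"
  shows "R ** transpose R = vector [vector [r0 \<bullet> r0, r0 \<bullet> r1], vector [r1 \<bullet> r0, r1 \<bullet> r1]]"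
  unfolding R_def vec_eq_iff forall_2
  by (simp add: matrix_matrix_mult_def transpose_def inner_vec_def mult.commute)

lemma min_norm_interpolant_apply:
  fixes R :: "real^'n^'m"
  assumes "invertible (R ** transpose R)" and "R *v w = 0"
  shows "(c v* R + w) v* (transpose R ** matrix_inv (R ** transpose R)) = c"
proof -
  have "(c v* R + w) v* (transpose R ** matrix_inv (R ** transpose R))
      = (c v* (R ** transpose R) + w v* transpose R) v* matrix_inv (R ** transpose R)"
    by (simp only: vector_matrix_mul_assoc [symmetric] vector_matrix_left_distrib)
  also have "\<dots> = c"
    using assms by (simp add: vector_matrix_mul_assoc matrix_mul_matrix_inv)
  finally show ?thesis .
qed

lemma vector_2_vector_matrix_mult:
  fixes r0 r1 :: "real^'n"
  shows "vector [a, b] v* (vector [r0, r1] :: real^'n^2) = a *\<^sub>R r0 + b *\<^sub>R r1"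
  by (simp add: vec_eq_iff vector_matrix_mult_def sum_2)

lemma vector_2_matrix_vector_mult:
  fixes r0 r1 :: "real^'n"
  shows "(vector [r0, r1] :: real^'n^2) *v x = vector [r0 \<bullet> x, r1 \<bullet> x]"
  by (simp add: vec_eq_iff forall_2 matrix_vector_mult_def inner_vec_def)

lemma min_norm_interpolant_equal_norm_rows:
  fixes r0 r1 x :: "real^'n"
  defines "R \<equiv> vector [r0, r1] :: real^'n^2"
    and "\<alpha> \<equiv> x \<bullet> (r0 + r1) / ((r0 + r1) \<bullet> (r0 + r1))"
    and "\<beta> \<equiv> x \<bullet> (r0 - r1) / ((r0 - r1) \<bullet> (r0 - r1))"
  assumes norm_eq: "r0 \<bullet> r0 = r1 \<bullet> r1" and nonzero: "r0 + r1 \<noteq> 0" "r0 - r1 \<noteq> 0"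
  shows "x v* (transpose R ** matrix_inv (R ** transpose R)) = vector [\<alpha> + \<beta>, \<alpha> - \<beta>]"
proof -
  define w where "w = x - \<alpha> *\<^sub>R (r0 + r1) - \<beta> *\<^sub>R (r0 - r1)"
  have orth: "(r0 + r1) \<bullet> (r0 - r1) = 0"
    using norm_eq by (simp add: algebra_simps inner_commute)
  have nz: "(r0 + r1) \<bullet> (r0 + r1) \<noteq> 0" "(r0 - r1) \<bullet> (r0 - r1) \<noteq> 0"
    using nonzero by simp_all
  moreover have "(r0 + r1) \<bullet> w = x \<bullet> (r0 + r1) - \<alpha> * ((r0 + r1) \<bullet> (r0 + r1))"
    and "(r0 - r1) \<bullet> w = x \<bullet> (r0 - r1) - \<beta> * ((r0 - r1) \<bullet> (r0 - r1))"
    using orth by (simp_all add: w_def inner_diff_right inner_commute)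
  ultimately have "(r0 + r1) \<bullet> w = 0" "(r0 - r1) \<bullet> w = 0"
    by (simp_all add: \<alpha>_def \<beta>_def)
  then have "r0 \<bullet> w = 0" "r1 \<bullet> w = 0"
    by (simp_all add: algebra_simps)
  then have Rw: "R *v w = 0"
    by (simp add: R_def vector_2_matrix_vector_mult vec_eq_iff forall_2)
  have x: "x = vector [\<alpha> + \<beta>, \<alpha> - \<beta>] v* R + w"
    by (simp add: R_def vector_2_vector_matrix_mult w_def algebra_simps)
  have "det (R ** transpose R) = (r0 \<bullet> r0)\<^sup>2 - (r0 \<bullet> r1)\<^sup>2"
    by (simp add: R_def gram_vector_2 det_2 norm_eq power2_eq_square inner_commute)
  also have "\<dots> = ((r0 + r1) \<bullet> (r0 + r1)) * ((r0 - r1) \<bullet> (r0 - r1)) / 4"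
    using norm_eq by (simp add: algebra_simps inner_commute power2_eq_square)
  finally have "det (R ** transpose R) \<noteq> 0"
    using nz by (metis divide_eq_0_iff mult_eq_0_iff zero_neq_numeral)
  then show ?thesis
    by (subst x) (simp add: min_norm_interpolant_apply invertible_det_nz Rw)
qed

lemma vector_4 [simp]:
  "(vector [x1, x2, x3, x4] :: 'a::zero^4) $ 1 = x1"
  "(vector [x1, x2, x3, x4] :: 'a::zero^4) $ 2 = x2"
  "(vector [x1, x2, x3, x4] :: 'a::zero^4) $ 3 = x3"
  "(vector [x1, x2, x3, x4] :: 'a::zero^4) $ 4 = x4"
  unfolding vector_def by simp_all

lemma inner_vector_4:
  "(vector [x1, x2, x3, x4] :: real^4) \<bullet> vector [y1, y2, y3, y4] = x1*y1 + x2*y2 + x3*y3 + x4*y4"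
  by (simp add: inner_vec_def sum_4)

lemma min_norm_interpolant_swapped_rows:
  fixes a b A B X Y :: real
  defines "R \<equiv> vector [vector [a, b, A, B], vector [b, a, B, A]] :: real^4^2"
    and "\<sigma> \<equiv> ((a + b)^2 + (X + Y) * (A + B)) / (2 * ((a + b)^2 + (A + B)^2))"
    and "\<delta> \<equiv> ((a - b)^2 + (X - Y) * (A - B)) / (2 * ((a - b)^2 + (A - B)^2))"
  assumes ab: "a + b \<noteq> 0" "a - b \<noteq> 0"
  shows "vector [a, b, X, Y] v* (transpose R ** matrix_inv (R ** transpose R))
    = vector [\<sigma> + \<delta>, \<sigma> - \<delta>]"
proof -
  define u0 u1 where "u0 = (vector [a, b, A, B] :: real^4)" and "u1 = (vector [b, a, B, A] :: real^4)"
  have sum_eqs: "u0 + u1 = vector [a + b, a + b, A + B, A + B]"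
    and diff_eqs: "u0 - u1 = vector [a - b, b - a, A - B, B - A]"
    by (simp_all add: u0_def u1_def vec_eq_iff forall_4)
  have "u0 + u1 \<noteq> 0" "u0 - u1 \<noteq> 0"
    using ab by (simp_all add: sum_eqs diff_eqs vec_eq_iff forall_4)
  moreover have "u0 \<bullet> u0 = u1 \<bullet> u1"
    by (simp add: u0_def u1_def inner_vector_4)
  ultimately show ?thesis
    unfolding R_def u0_def [symmetric] u1_def [symmetric]
    by (subst min_norm_interpolant_equal_norm_rows)
       (simp_all add: sum_eqs diff_eqs inner_vector_4 \<sigma>_def \<delta>_def power2_eq_square algebra_simps)
qed

lemma min_norm_logits_homophily:
  fixes p n h \<theta> :: real
  assumes "p \<noteq> 0"
  defines "a \<equiv> 1/2 + p" and "b \<equiv> 1/2 - p"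
  defines "R \<equiv> vector [vector [a, b, n * (h*a + (1-h)*b), n * (h*b + (1-h)*a)],
                       vector [b, a, n * (h*b + (1-h)*a), n * (h*a + (1-h)*b)]] :: real^4^2"
    and "b1 \<equiv> n^2 * (2*h - 1) / (1 + n^2 * (2*h - 1)^2)"
  shows "vector [a, b, n * (\<theta>*a + (1-\<theta>)*b), n * (\<theta>*b + (1-\<theta>)*a)]
           v* (transpose R ** matrix_inv (R ** transpose R))
         = vector [1 + b1 * (\<theta> - h), b1 * (h - \<theta>)]"
proof -
  define c where "c = n * (2*h - 1)"
  define A B where "A = n * (h*a + (1-h)*b)" and "B = n * (h*b + (1-h)*a)"
  define X Y where "X = n * (\<theta>*a + (1-\<theta>)*b)" and "Y = n * (\<theta>*b + (1-\<theta>)*a)"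
  define \<sigma> where "\<sigma> = ((a + b)^2 + (X + Y) * (A + B)) / (2 * ((a + b)^2 + (A + B)^2))"
  define \<delta> where "\<delta> = ((a - b)^2 + (X - Y) * (A - B)) / (2 * ((a - b)^2 + (A - B)^2))"
  have sum_eqs: "a + b = 1" "A + B = n" "X + Y = n"
    by (simp_all add: a_def b_def A_def B_def X_def Y_def algebra_simps)
  have diff_eqs: "a - b = 2*p" "A - B = 2*p * c" "X - Y = 2*p * (n * (2*\<theta> - 1))"
    by (simp_all add: a_def b_def c_def A_def B_def X_def Y_def algebra_simps)
  have pos: "1 + n^2 > 0" "1 + c^2 > 0"
    by (simp_all add: add_pos_nonneg)
  have logits: "vector [a, b, X, Y] v* (transpose R ** matrix_inv (R ** transpose R))
      = vector [\<sigma> + \<delta>, \<sigma> - \<delta>]"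
    unfolding R_def A_def [symmetric] B_def [symmetric] \<sigma>_def \<delta>_def
    using \<open>p \<noteq> 0\<close> by (intro min_norm_interpolant_swapped_rows) (simp_all add: sum_eqs diff_eqs)
  have \<sigma>_eq: "\<sigma> = 1/2"
    using pos by (simp add: \<sigma>_def sum_eqs power2_eq_square)
  have \<delta>_eq: "\<delta> = (1 + c * (n * (2*\<theta> - 1))) / (2 * (1 + c^2))"
  proof -
    have "\<delta> = (4*p^2 * (1 + c * (n * (2*\<theta> - 1)))) / (4*p^2 * (2 * (1 + c^2)))"
      by (simp add: \<delta>_def diff_eqs power2_eq_square algebra_simps)
    then show ?thesis
      using \<open>p \<noteq> 0\<close> by simp
  qed
  have b1_eq: "b1 = c * n / (1 + c^2)"
    by (simp add: b1_def c_def power2_eq_square algebra_simps)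
  have "c^2 = c * n * (2*h - 1)"
    by (simp add: c_def power2_eq_square)
  then have "\<sigma> + \<delta> = 1 + b1 * (\<theta> - h)" and "\<sigma> - \<delta> = b1 * (h - \<theta>)"
    unfolding \<sigma>_eq \<delta>_eq b1_eq using pos(2)
    by (simp add: field_simps, algebra)+
  with logits show ?thesis
    by (simp add: X_def Y_def)
qed

lemma finite_nbrs: "finite V \<Longrightarrow> finite (nbrs V E i)"
  unfolding nbrs_def by simp

lemma sum_feat_nbrs:
  assumes "finite V"
  shows "(\<Sum>j\<in>nbrs V E i. feat p (y j)) =
    real (card {j\<in>nbrs V E i. y j = 0}) *\<^sub>R feat p 0 + real (card {j\<in>nbrs V E i. y j \<noteq> 0}) *\<^sub>R feat p 1"
proof -
  have "(\<Sum>j\<in>nbrs V E i. feat p (y j)) = (\<Sum>j\<in>nbrs V E i. if y j = 0 then feat p 0 else feat p 1)"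
    by (intro sum.cong) (auto simp: feat_def)
  also have "\<dots> = real (card {j\<in>nbrs V E i. y j = 0}) *\<^sub>R feat p 0 + real (card {j\<in>nbrs V E i. y j \<noteq> 0}) *\<^sub>R feat p 1"
    using finite_nbrs [OF assms] by (simp add: sum.If_cases Int_def Compl_eq scaleR_conv_of_real)
  finally show ?thesis .
qed

text \<open>This also holds for isolated nodes, whose local homophily is \<open>0 / 0 = 0\<close>.\<close>

lemma card_same_class_nbrs:
  assumes "finite V"
  shows "real (card {j\<in>nbrs V E i. y j = y i}) = local_homophily V E y i * real (card (nbrs V E i))"
proof (cases "nbrs V E i = {}")
  case False
  then have "card (nbrs V E i) \<noteq> 0"
    using finite_nbrs [OF assms] by simp
  then show ?thesis
    by (simp add: local_homophily_def)
qed simp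

lemma rep_eq_counts:
  fixes V :: "'a set" and E :: "'a \<Rightarrow> 'a \<Rightarrow> bool" and y :: "'a \<Rightarrow> nat" and i :: 'a
  assumes fin: "finite V"
  defines "n \<equiv> real (card (nbrs V E i))" and "s \<equiv> real (card {j\<in>nbrs V E i. y j = 0})"
  shows "rep V E y p i = vector [feat p (y i) $ 1, feat p (y i) $ 2,
     s * (1/2 + p) + (n - s) * (1/2 - p), s * (1/2 - p) + (n - s) * (1/2 + p)]"
proof -
  have "nbrs V E i = {j\<in>nbrs V E i. y j = 0} \<union> {j\<in>nbrs V E i. y j \<noteq> 0}"
    by auto
  then have "n = s + real (card {j\<in>nbrs V E i. y j \<noteq> 0})"
    unfolding n_def s_def using finite_nbrs [OF fin]
    by (metis (no_types, lifting) card_Un_disjoint disjoint_iff finite_Un mem_Collect_eq of_nat_add)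
  then show ?thesis
    unfolding rep_def Let_def sum_feat_nbrs [OF fin] s_def [symmetric]
    by (simp add: feat_def)
qed

lemma rep_class0:
  fixes V :: "'a set" and E :: "'a \<Rightarrow> 'a \<Rightarrow> bool" and y :: "'a \<Rightarrow> nat" and i :: 'a
  assumes fin: "finite V" and cls: "y i = 0"
  defines "n \<equiv> real (card (nbrs V E i))" and "\<theta> \<equiv> local_homophily V E y i"
  shows "rep V E y p i = vector [1/2 + p, 1/2 - p,
    n * (\<theta> * (1/2 + p) + (1 - \<theta>) * (1/2 - p)), n * (\<theta> * (1/2 - p) + (1 - \<theta>) * (1/2 + p))]"
proof -
  have count: "real (card {j\<in>nbrs V E i. y j = 0}) = \<theta> * n"
    using card_same_class_nbrs [OF fin, of E i y] cls by (simp add: \<theta>_def n_def)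
  show ?thesis
    unfolding rep_eq_counts [OF fin] count n_def [symmetric] by (simp add: cls feat_def field_simps)
qed

lemma rep_class1:
  fixes V :: "'a set" and E :: "'a \<Rightarrow> 'a \<Rightarrow> bool" and y :: "'a \<Rightarrow> nat" and i :: 'a
  assumes fin: "finite V" and cls: "y i = 1" and binary: "\<And>j. j \<in> V \<Longrightarrow> y j \<in> {0, 1}"
  defines "n \<equiv> real (card (nbrs V E i))" and "\<theta> \<equiv> local_homophily V E y i"
  shows "rep V E y p i = vector [1/2 - p, 1/2 + p,
    n * (\<theta> * (1/2 - p) + (1 - \<theta>) * (1/2 + p)), n * (\<theta> * (1/2 + p) + (1 - \<theta>) * (1/2 - p))]"
proof -
  have "{j\<in>nbrs V E i. y j = 0} = nbrs V E i - {j\<in>nbrs V E i. y j = y i}"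
    using binary cls by (auto simp: nbrs_def)
  then have count: "real (card {j\<in>nbrs V E i. y j = 0}) = n - \<theta> * n"
    using card_same_class_nbrs [OF fin, of E i y] finite_nbrs [OF fin, of E i]
    by (simp add: card_Diff_subset of_nat_diff card_mono \<theta>_def n_def)
  show ?thesis
    unfolding rep_eq_counts [OF fin] count n_def [symmetric] by (simp add: cls feat_def field_simps)
qed

theorem theorem2:
  fixes V :: "'a set" and E :: "'a \<Rightarrow> 'a \<Rightarrow> bool" and y :: "'a \<Rightarrow> nat"
    and Tr :: "'a set" and d :: nat and h p :: real and t :: 'a
  assumes finV: "finite V"
    and sym: "\<And>i j. E i j \<Longrightarrow> E j i"
    and irrefl: "\<And>i. \<not> E i i"
    and cls: "\<And>i. i \<in> V \<Longrightarrow> y i \<in> {0, 1}"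
    and d1: "d \<ge> 1"
    and h01: "0 \<le> h" "h \<le> 1"
    and hd_int: "h * real d \<in> \<int>"
    and p01: "0 < p" "p \<le> 1/2"
    and TrV: "Tr \<subseteq> V"
    and Tr0: "\<exists>i\<in>Tr. y i = 0"
    and Tr1: "\<exists>i\<in>Tr. y i = 1"
    and Trdeg: "\<And>i. i \<in> Tr \<Longrightarrow> card (nbrs V E i) = d"
    and Trhom: "\<And>i. i \<in> Tr \<Longrightarrow> local_homophily V E y i = h"
    and tV: "t \<in> V" and t0: "y t = 0"
    and tdeg: "card (nbrs V E t) = d"
  shows
    "let u0 = rep V E y p (SOME i. i \<in> Tr \<and> y i = 0);
         u1 = rep V E y p (SOME i. i \<in> Tr \<and> y i = 1);
         R = (vector [u0, u1] :: real^4^2);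
         W = transpose R ** matrix_inv (R ** transpose R) ** (mat 1 :: real^2^2);
         ht = local_homophily V E y t;
         \<alpha>t = ht - h;
         b1 = (real d)^2 * (2*h - 1) / (1 + (real d)^2 * (2*h - 1)^2)
     in rep V E y p t v* W = onehot 0 + b1 *\<^sub>R vector [\<alpha>t, - \<alpha>t]"
proof -
  define i0 where "i0 = (SOME i. i \<in> Tr \<and> y i = 0)"
  define i1 where "i1 = (SOME i. i \<in> Tr \<and> y i = 1)"
  have i0: "i0 \<in> Tr" "y i0 = 0" and i1: "i1 \<in> Tr" "y i1 = 1"
    using someI_ex [OF Tr0 [unfolded Bex_def]] someI_ex [OF Tr1 [unfolded Bex_def]]
    by (simp_all add: i0_def i1_def)
  have "p \<noteq> 0"
    using p01 by simp
  show ?thesis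
    using min_norm_logits_homophily [OF \<open>p \<noteq> 0\<close>, where n = "real d" and h = h and \<theta> = "local_homophily V E y t"]
    unfolding Let_def i0_def [symmetric] i1_def [symmetric]
    by (simp add: rep_class0 [OF finV] rep_class1 [OF finV _ cls] i0 i1 Trdeg Trhom t0 tdeg
        onehot_def vec_eq_iff forall_2)
qed

end
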